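(* Let $f\in\mathbb{C}[X,Y]$ be a quasi-convenient polynomial which is nondegenerate at infinity, and let $g,h\in\mathbb{C}[X,Y]$ be polynomials of positive degree that are coprime and both divide $f$ in $\mathbb{C}[X,Y]$. Then $g$ and $h$ are quasi-convenient and the pair $(g,h)$ is nondegenerate at infinity.
   Context: Write $f=\sum c_{\alpha\beta}X^\alpha Y^\beta\in\mathbb{C}[X,Y]$ and $\operatorname{supp} f=\{(\alpha,\beta)\in\mathbb{N}^2: c_{\alpha\beta}\neq 0\}$. A nonzero polynomial $f$ of positive degree is quasi-convenient if $c_{\alpha 0}\neq 0$ and $c_{0\beta}\neq 0$ for some integers $\alpha,\beta\ge 0$. For a nonzero real vector $\vec w=[p,q]$, let $d_{\vec w}(f)=\max\{p\alpha+q\beta:(\alpha,\beta)\in\operatorname{supp} f\}$ and $\operatorname{in}(f,\vec w)=\sum_{p\alpha+q\beta=d_{\vec w}(f)} c_{\alpha\beta}X^\alpha Y^\beta$. A quasi-convenient $f$ is nondegenerate at infinity if for every real vector $\vec w=[p,q]$ with $p>0$ or $q>0$ the system $\operatorname{in}(f,\vec w)=\frac{\partial}{\partial X}\operatorname{in}(f,\vec w)=\frac{\partial}{\partial Y}\operatorname{in}(f,\vec w)=0$ has no solutions in $\mathbb{C}^*\times\mathbb{C}^*$, where $\mathbb{C}^*=\mathbb{C}\setminus\{0\}$. A pair $(g,h)$ of quasi-convenient polynomials is nondegenerate at infinity if for every real vector $\vec w=[p,q]$ with $p>0$ or $q>0$ the system $\operatorname{in}(g,\vec w)=\operatorname{in}(h,\vec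 w)=0$ has no solutions in $\mathbb{C}^*\times\mathbb{C}^*$. *)

theory Defs
  imports "HOL-Computational_Algebra.Computational_Algebra"
begin

text \<open>Bivariate polynomials C[X,Y] are represented as complex poly poly = (C[X])[Y]:
  the coefficient c_{alpha beta} of X^alpha Y^beta in f is coeff (coeff f beta) alpha.\<close>

type_synonym bipoly = "complex poly poly"

definition bcoeff :: "bipoly \<Rightarrow> nat \<Rightarrow> nat \<Rightarrow> complex" where
  "bcoeff f a b = coeff (coeff f b) a"

definition bsupp :: "bipoly \<Rightarrow> (nat \<times> nat) set" where
  "bsupp f = {(a, b). bcoeff f a b \<noteq> 0}"

definition bmonom :: "complex \<Rightarrow> nat \<Rightarrow> nat \<Rightarrow> bipoly" where
  "bmonom c a b = monom (monom c a) b"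

definition beval :: "bipoly \<Rightarrow> complex \<Rightarrow> complex \<Rightarrow> complex" where
  "beval f x y = poly (map_poly (\<lambda>p. poly p x) f) y"

definition dX :: "bipoly \<Rightarrow> bipoly" where
  "dX f = map_poly pderiv f"

definition dY :: "bipoly \<Rightarrow> bipoly" where
  "dY f = pderiv f"

definition pos_degree :: "bipoly \<Rightarrow> bool" where
  "pos_degree f \<longleftrightarrow> (\<exists>(a, b) \<in> bsupp f. a + b > 0)"

definition quasi_convenient :: "bipoly \<Rightarrow> bool" where
  "quasi_convenient f \<longleftrightarrow> f \<noteq> 0 \<and> pos_degree f \<and>
     (\<exists>a. bcoeff f a 0 \<noteq> 0) \<and> (\<exists>b. bcoeff f 0 b \<noteq> 0)"

definition wdeg :: "bipoly \<Rightarrow> real \<Rightarrow> real \<Rightarrow> real" where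
  "wdeg f p q = Max ((\<lambda>(a, b). p * real a + q * real b) ` bsupp f)"

definition initial :: "bipoly \<Rightarrow> real \<Rightarrow> real \<Rightarrow> bipoly" where
  "initial f p q = (\<Sum>(a, b) \<in> bsupp f.
      if p * real a + q * real b = wdeg f p q then bmonom (bcoeff f a b) a b else 0)"

definition nondeg_infty :: "bipoly \<Rightarrow> bool" where
  "nondeg_infty f \<longleftrightarrow> quasi_convenient f \<and>
     (\<forall>p q :: real. p > 0 \<or> q > 0 \<longrightarrow>
        \<not> (\<exists>x y. x \<noteq> 0 \<and> y \<noteq> 0 \<and> beval (initial f p q) x y = 0 \<and>
              beval (dX (initial f p q)) x y = 0 \<and> beval (dY (initial f p q)) x y = 0))"

definition pair_nondeg_infty :: "bipoly \<Rightarrow> bipoly \<Rightarrow> bool" where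
  "pair_nondeg_infty g h \<longleftrightarrow> quasi_convenient g \<and> quasi_convenient h \<and>
     (\<forall>p q :: real. p > 0 \<or> q > 0 \<longrightarrow>
        \<not> (\<exists>x y. x \<noteq> 0 \<and> y \<noteq> 0 \<and> beval (initial g p q) x y = 0 \<and>
              beval (initial h p q) x y = 0))"

end

theory Submission
  imports Defs "HOL-Computational_Algebra.Field_as_Ring"
begin

text \<open>Weighted degrees add under multiplication, so taking initial forms is multiplicative:
  writing f = g h k, the initial form of f is the product of those of g, h and k. A common
  zero of in(g,w) and in(h,w) in the torus is therefore a common zero of in(f,w) and both of
  its partial derivatives (Leibniz rule), which nondegeneracy of f forbids. Quasi-convenience
  says that f(X,0) and f(0,Y) are nonzero, and this passes to every factor of f.\<close>

lemma bipoly_eqI: "(\<And>a b. bcoeff f a b = bcoeff g a b) \<Longrightarrow> f = g"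
  by (simp add: bcoeff_def poly_eq_iff)

lemma bcoeff_0 [simp]: "bcoeff 0 a b = 0"
  by (simp add: bcoeff_def)

lemma bcoeff_mult:
  "bcoeff (f * g) a b = (\<Sum>j\<le>b. \<Sum>i\<le>a. bcoeff f i j * bcoeff g (a - i) (b - j))"
  by (simp add: bcoeff_def coeff_mult coeff_sum)

lemma bcoeff_sum: "bcoeff (sum F A) a b = (\<Sum>x\<in>A. bcoeff (F x) a b)"
  by (simp add: bcoeff_def coeff_sum)

lemma bcoeff_bmonom: "bcoeff (bmonom c a b) a' b' = (if a = a' \<and> b = b' then c else 0)"
  by (simp add: bcoeff_def bmonom_def)

lemma finite_bsupp: "finite (bsupp f)"
proof -
  let ?M = "Max ((\<lambda>j. degree (coeff f j)) ` {..degree f})"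
  have "bsupp f \<subseteq> {..?M} \<times> {..degree f}"
  proof
    fix x assume "x \<in> bsupp f"
    then obtain a b where x: "x = (a, b)" and nz: "coeff (coeff f b) a \<noteq> 0"
      by (auto simp: bsupp_def bcoeff_def)
    then have b: "b \<le> degree f"
      by (metis coeff_0 le_degree)
    have "a \<le> degree (coeff f b)"
      using nz le_degree by blast
    also have "\<dots> \<le> ?M"
      using b by (intro Max_ge) auto
    finally show "x \<in> {..?M} \<times> {..degree f}"
      using x b by auto
  qed
  then show ?thesis
    by (rule finite_subset) auto
qed

lemma bsupp_nonempty: "f \<noteq> 0 \<Longrightarrow> bsupp f \<noteq> {}"
  by (auto simp: bsupp_def bcoeff_def poly_eq_iff)

lemma bcoeff_initial:
  "bcoeff (initial f p q) a b =
     (if p * real a + q * real b = wdeg f p q then bcoeff f a b else 0)"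
proof -
  have "bcoeff (initial f p q) a b = (\<Sum>x\<in>bsupp f. if x = (a, b) then
      (if p * real a + q * real b = wdeg f p q then bcoeff f a b else 0) else 0)"
    unfolding initial_def bcoeff_sum
    by (intro sum.cong) (auto simp: bcoeff_bmonom split: if_splits)
  also have "\<dots> = (if p * real a + q * real b = wdeg f p q then bcoeff f a b else 0)"
    using finite_bsupp[of f] by (auto simp: bsupp_def)
  finally show ?thesis .
qed

lemma wdeg_ge: "bcoeff f a b \<noteq> 0 \<Longrightarrow> p * real a + q * real b \<le> wdeg f p q"
  unfolding wdeg_def using finite_bsupp[of f]
  by (intro Max_ge) (auto simp: bsupp_def)

lemma wdeg_attained:
  assumes "f \<noteq> 0"
  obtains a b where "bcoeff f a b \<noteq> 0" and "p * real a + q * real b = wdeg f p q"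
proof -
  have "wdeg f p q \<in> (\<lambda>(a, b). p * real a + q * real b) ` bsupp f"
    unfolding wdeg_def using finite_bsupp[of f] bsupp_nonempty[OF assms] by (intro Max_in) auto
  then show ?thesis
    using that by (fastforce simp: bsupp_def)
qed

lemma initial_nonzero: "f \<noteq> 0 \<Longrightarrow> initial f p q \<noteq> 0"
  by (metis wdeg_attained bcoeff_initial bcoeff_0)

lemma bcoeff_mult_initial:
  "bcoeff (initial f p q * initial g p q) a b =
     (if p * real a + q * real b = wdeg f p q + wdeg g p q then bcoeff (f * g) a b else 0)"
proof -
  define w where "w = (\<lambda>a b. p * real a + q * real b)"
  have w_split: "w a b = w i j + w (a - i) (b - j)" if "i \<le> a" "j \<le> b" for i j
    using that by (simp add: w_def of_nat_diff algebra_simps)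
  show ?thesis
  proof (cases "w a b = wdeg f p q + wdeg g p q")
    case True
    have "bcoeff (initial f p q) i j * bcoeff (initial g p q) (a - i) (b - j) =
          bcoeff f i j * bcoeff g (a - i) (b - j)" if "i \<le> a" "j \<le> b" for i j
    proof (cases "bcoeff f i j * bcoeff g (a - i) (b - j) = 0")
      case False
      \<comment> \<open>both weights are bounded by the weighted degrees and add up to their sum\<close>
      then have "w i j \<le> wdeg f p q" "w (a - i) (b - j) \<le> wdeg g p q"
        using wdeg_ge unfolding w_def by auto
      then have "w i j = wdeg f p q" "w (a - i) (b - j) = wdeg g p q"
        using True w_split[OF that] by linarith+
      then show ?thesis
        by (simp add: bcoeff_initial w_def)
    qed (auto simp: bcoeff_initial)
    then show ?thesis
      using True unfolding bcoeff_mult w_def by (auto intro!: sum.cong)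
  next
    case False
    then have "bcoeff (initial f p q) i j * bcoeff (initial g p q) (a - i) (b - j) = 0"
      if "i \<le> a" "j \<le> b" for i j
      using w_split[OF that] by (auto simp: bcoeff_initial w_def)
    then show ?thesis
      using False unfolding bcoeff_mult w_def by (auto intro!: sum.neutral)
  qed
qed

lemma wdeg_mult:
  assumes "f \<noteq> 0" and "g \<noteq> 0"
  shows "wdeg (f * g) p q = wdeg f p q + wdeg g p q"
proof (rule antisym)
  obtain a b where ab: "bcoeff (f * g) a b \<noteq> 0" "p * real a + q * real b = wdeg (f * g) p q"
    using wdeg_attained[of "f * g" p q] assms by (metis mult_eq_0_iff)
  then obtain i j where ij: "i \<le> a" "j \<le> b"
    and nz: "bcoeff f i j \<noteq> 0" "bcoeff g (a - i) (b - j) \<noteq> 0"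
    unfolding bcoeff_mult by (metis (no_types, lifting) atMost_iff mult_eq_0_iff sum.neutral)
  have "p * real a + q * real b
      = (p * real i + q * real j) + (p * real (a - i) + q * real (b - j))"
    using ij by (simp add: of_nat_diff algebra_simps)
  then show "wdeg (f * g) p q \<le> wdeg f p q + wdeg g p q"
    using ab wdeg_ge[OF nz(1), of p q] wdeg_ge[OF nz(2), of p q] by linarith
next
  have "initial f p q * initial g p q \<noteq> 0"
    using initial_nonzero assms by simp
  then obtain a b where "bcoeff (initial f p q * initial g p q) a b \<noteq> 0"
    using bipoly_eqI[of _ 0] by (metis bcoeff_0)
  then show "wdeg f p q + wdeg g p q \<le> wdeg (f * g) p q"
    by (metis bcoeff_mult_initial wdeg_ge)
qed

lemma initial_mult:
  assumes "f \<noteq> 0" and "g \<noteq> 0"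
  shows "initial (f * g) p q = initial f p q * initial g p q"
  by (rule bipoly_eqI) (simp add: bcoeff_mult_initial bcoeff_initial wdeg_mult[OF assms])

lemma beval_conv_poly: "beval f x y = poly (poly f [:y:]) x"
  unfolding beval_def by (induction f rule: pCons_induct) (simp_all add: map_poly_pCons)

lemma beval_mult: "beval (f * g) x y = beval f x y * beval g x y"
  by (simp add: beval_conv_poly)

lemma beval_add: "beval (f + g) x y = beval f x y + beval g x y"
  by (simp add: beval_conv_poly)

lemma dX_mult: "dX (f * g) = dX f * g + f * dX g"
proof (rule poly_eqI)
  fix n
  have "coeff (dX (f * g)) n = (\<Sum>i\<le>n. pderiv (coeff f i * coeff g (n - i)))"
    by (simp add: dX_def coeff_map_poly coeff_mult higher_pderiv_sum[of 1, simplified])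
  also have "\<dots> = (\<Sum>i\<le>n. pderiv (coeff f i) * coeff g (n - i) +
                            coeff f i * pderiv (coeff g (n - i)))"
    by (simp add: pderiv_mult algebra_simps)
  also have "\<dots> = coeff (dX f * g + f * dX g) n"
    by (simp only: dX_def coeff_add coeff_mult sum.distrib coeff_map_poly pderiv_0)
  finally show "coeff (dX (f * g)) n = coeff (dX f * g + f * dX g) n" .
qed

lemma dY_mult: "dY (f * g) = dY f * g + f * dY g"
  by (simp add: dY_def pderiv_mult algebra_simps)

lemma singular_point_mult:
  assumes "beval A x y = 0" and "beval B x y = 0"
  shows "beval (A * B) x y = 0 \<and> beval (dX (A * B)) x y = 0 \<and> beval (dY (A * B)) x y = 0"
  using assms by (simp add: beval_mult beval_add dX_mult dY_mult)

lemma pos_degree_nonzero: "pos_degree g \<Longrightarrow> g \<noteq> 0"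
  by (auto simp: pos_degree_def bsupp_def)

text \<open>The map below is the substitution X = 0.\<close>

lemma map_poly_coeff_0_mult:
  "map_poly (\<lambda>p. coeff p 0) (f * g) = map_poly (\<lambda>p. coeff p 0) f * map_poly (\<lambda>p. coeff p 0) g"
  by (rule poly_eqI) (simp add: coeff_map_poly coeff_mult coeff_mult_0 coeff_sum)

lemma quasi_convenient_dvd:
  assumes "quasi_convenient f" and "g dvd f" and "pos_degree g"
  shows "quasi_convenient g"
proof -
  obtain k where f: "f = g * k"
    using assms(2) by blast
  obtain a b where "bcoeff f a 0 \<noteq> 0" "bcoeff f 0 b \<noteq> 0"
    using assms(1) by (auto simp: quasi_convenient_def)
  then have "coeff f 0 \<noteq> 0" "map_poly (\<lambda>p. coeff p 0) f \<noteq> 0"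
    by (auto simp: bcoeff_def poly_eq_iff coeff_map_poly)
  then have "coeff g 0 \<noteq> 0" "map_poly (\<lambda>p. coeff p 0) g \<noteq> 0"
    by (auto simp: f coeff_mult_0 map_poly_coeff_0_mult)
  then have "\<exists>a. bcoeff g a 0 \<noteq> 0" "\<exists>b. bcoeff g 0 b \<noteq> 0"
    by (auto simp: bcoeff_def poly_eq_iff coeff_map_poly)
  then show ?thesis
    using assms(3) pos_degree_nonzero by (auto simp: quasi_convenient_def)
qed

lemma pair_nondeg_infty_mult_dvd:
  assumes "nondeg_infty f" and "quasi_convenient g" and "quasi_convenient h"
    and "g * h dvd f"
  shows "pair_nondeg_infty g h"
proof -
  obtain k where f: "f = g * (h * k)"
    using assms(4) by (metis dvdE mult.assoc)
  have "f \<noteq> 0" "g \<noteq> 0" "h \<noteq> 0"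
    using assms by (auto simp: nondeg_infty_def quasi_convenient_def)
  then have "k \<noteq> 0"
    using f by auto
  have "\<not> (beval (initial g p q) x y = 0 \<and> beval (initial h p q) x y = 0)"
    if "p > 0 \<or> q > 0" "x \<noteq> 0" "y \<noteq> 0" for p q x y
  proof
    assume "beval (initial g p q) x y = 0 \<and> beval (initial h p q) x y = 0"
    moreover have "initial f p q = initial g p q * (initial h p q * initial k p q)"
      using \<open>g \<noteq> 0\<close> \<open>h \<noteq> 0\<close> \<open>k \<noteq> 0\<close> by (simp add: f initial_mult)
    ultimately have "beval (initial f p q) x y = 0 \<and> beval (dX (initial f p q)) x y = 0 \<and>
        beval (dY (initial f p q)) x y = 0"
      using singular_point_mult by (simp add: beval_mult)
    then show False
      using assms(1) that unfolding nondeg_infty_def by blast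
  qed
  then show ?thesis
    using assms(2,3) by (auto simp: pair_nondeg_infty_def)
qed

theorem lemma3p1:
  fixes f g h :: bipoly
  assumes "quasi_convenient f" and "nondeg_infty f"
    and "pos_degree g" and "pos_degree h"
    and "coprime g h" and "g dvd f" and "h dvd f"
  shows "quasi_convenient g \<and> quasi_convenient h \<and> pair_nondeg_infty g h"
proof -
  have g: "quasi_convenient g" and h: "quasi_convenient h"
    using quasi_convenient_dvd assms by blast+
  moreover have "g * h dvd f"
    using assms(6,7,5) by (rule divides_mult)
  ultimately show ?thesis
    using pair_nondeg_infty_mult_dvd assms(2) by blast
qed

end
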